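(* The CircuITS model is marginalization consistent: for every observation set $\mathcal{X}$, every forecasting query $\mathcal{Q}$ with targets $\mathbf{y}$, and every subset $\mathbf{y}_A\subset\mathbf{y}$ of targets with corresponding queries $\mathcal{Q}_A$, $$\int p(\mathbf{y}\mid\mathcal{Q},\mathcal{X})\,d\mathbf{y}_A=p(\mathbf{y}\setminus\mathbf{y}_A\mid\mathcal{Q}\setminus\mathcal{Q}_A,\mathcal{X}).$$
   Context: Data: observations $\mathcal{X}=((t_n,c_n,y_n))_{n=1}^N\subset\mathbb{R}\times\{1,\dots,C\}\times\mathbb{R}$; query $\mathcal{Q}=((t_m^{\mathrm{qry}},c_m^{\mathrm{qry}}))_m$ with targets $\mathbf{y}$; $\mathcal{Q}_c,\mathbf{y}_c$ are the queries/targets of channel $c$. CircuITS defines $p(\mathbf{y}\mid\mathcal{Q},\mathcal{X})$ as follows. Fix $K\ge1$ and an ordering of channels $1,\dots,C$. Leaves: for each channel $c$ and component $k\in\{1,\dots,K\}$ a leaf density $p_{c,k}(\mathbf{y}_c)=\big(\prod_{i}f(y_i;\theta_i^k)\big)|R^{c,k}|^{-1/2}\exp(-\frac12\mathbf{z}^\top((R^{c,k})^{-1}-I)\mathbf{z})$ with $z_i=\Phi^{-1}(F(y_i;\theta_i^k))$ ($\Phi$ the standard normal CDF), where $F(\cdot;\theta)=f_L\circ\dots\circ f_1$, $f_l(x)=\sigma(A_lx+b_l)$ with positive weights (a strictly increasing differentiable CDF, density $f=\partial F/\partial y$); $R^{c,k}_{ij}=\mathbf{v}_i^\top\mathbf{v}_j/H$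 for $i\ne j$, $R^{c,k}_{ii}=1$, $\mathbf{v}_i=\tanh(g(\mathbf{e}_i^k))\in\mathbb{R}^H$; $\mathbf{e}_i=\mathrm{Proj}([\phi(t_i^{\mathrm{qry}})\|\tilde{\mathbf{h}}_{c}])$ split into $K$ blocks $\mathbf{e}_i^k$, with $\tilde{\mathbf{h}}_c$ computed from $\mathcal{X}$ only and $\theta_i^k$ a function of $\mathbf{e}_i^k$ (fixed maps $\phi,\mathrm{Proj},g$). If $\mathcal{Q}_c$ is empty, $p_{c,k}\equiv1$. Recursion: $\phi^{(1)}_k=p_{1,k}(\mathbf{y}_1)$; for $c>1$, $\phi^{(c)}_k=\sum_{i,j=1}^K W^{(c)}_{(i,j),k}\,\phi^{(c-1)}_i\,p_{c,j}(\mathbf{y}_c)$ with $W^{(c)}_{(i,j),k}\ge0$, $\sum_{(i,j)}W^{(c)}_{(i,j),k}=1$; finally $p(\mathbf{y}\mid\mathcal{Q},\mathcal{X})=\sum_{k=1}^K w^{\mathrm{root}}_k\phi^{(C)}_k$ with $w^{\mathrm{root}}$ a probability vector. The weights $w^{\mathrm{root}}$ and $W^{(c)}$ are functions of $\mathcal{X}$ only, not of $\mathcal{Q}$. *)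

theory Defs
  imports "HOL-Probability.Probability"
begin

definition Phi :: "real \<Rightarrow> real" where
  "Phi x = (\<integral>t. indicator {..x} t * std_normal_density t \<partial>lborel)"

definition Phi_inv :: "real \<Rightarrow> real" where
  "Phi_inv u = (THE z. Phi z = u)"

definition det_on :: "'i set \<Rightarrow> ('i \<Rightarrow> 'i \<Rightarrow> real) \<Rightarrow> real" where
  "det_on J M = (\<Sum>p | p permutes J. of_int (sign p) * (\<Prod>i\<in>J. M i (p i)))"

definition inv_on :: "'i set \<Rightarrow> ('i \<Rightarrow> 'i \<Rightarrow> real) \<Rightarrow> ('i \<Rightarrow> 'i \<Rightarrow> real)" where
  "inv_on J M = (THE S. (\<forall>i\<in>J. \<forall>j\<in>J. (\<Sum>k\<in>J. M i k * S k j) = (if i = j then 1 else 0))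
                      \<and> (\<forall>i j. i \<notin> J \<or> j \<notin> J \<longrightarrow> S i j = 0))"

definition copula_leaf :: "'i set \<Rightarrow> ('i \<Rightarrow> real \<Rightarrow> real) \<Rightarrow> ('i \<Rightarrow> real \<Rightarrow> real)
     \<Rightarrow> ('i \<Rightarrow> 'i \<Rightarrow> real) \<Rightarrow> ('i \<Rightarrow> real) \<Rightarrow> real" where
  "copula_leaf J Fi fi R y =
     (if J = {} then 1 else
      (let z = (\<lambda>i. Phi_inv (Fi i (y i))); Ri = inv_on J R in
       (\<Prod>i\<in>J. fi i (y i)) / sqrt (det_on J R)
       * exp (- (1/2) * (\<Sum>i\<in>J. \<Sum>j\<in>J. z i * (Ri i j - (if i = j then 1 else 0)) * z j))))"

text \<open>Circuit recursion over channels 1..C; L c k is the leaf p_{c,k}(y_c),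
  W c (i,j) k the sum-node weights, components indexed 1..K.\<close>
fun circ :: "nat \<Rightarrow> (nat \<Rightarrow> nat \<times> nat \<Rightarrow> nat \<Rightarrow> real) \<Rightarrow> (nat \<Rightarrow> nat \<Rightarrow> real) \<Rightarrow> nat \<Rightarrow> nat \<Rightarrow> real" where
  "circ K W L 0 k = 1"
| "circ K W L (Suc 0) k = L 1 k"
| "circ K W L (Suc (Suc c)) k =
     (\<Sum>i\<in>{1..K}. \<Sum>j\<in>{1..K}. W (Suc (Suc c)) (i, j) k * circ K W L (Suc c) i * L (Suc (Suc c)) j)"

definition emb :: "(real \<Rightarrow> 'a) \<Rightarrow> ('a \<times> 'b \<Rightarrow> nat \<Rightarrow> 'e) \<Rightarrow> ('x \<Rightarrow> nat \<Rightarrow> 'b) \<Rightarrow> 'x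
     \<Rightarrow> nat \<Rightarrow> real \<Rightarrow> nat \<Rightarrow> 'e" where
  "emb \<phi> Proj htil X k t c = Proj (\<phi> t, htil X c) k"

definition corrR :: "('e \<Rightarrow> real^'h) \<Rightarrow> ('q \<Rightarrow> 'e) \<Rightarrow> 'q \<Rightarrow> 'q \<Rightarrow> real" where
  "corrR g e i j = (if i = j then 1 else
     inner (\<chi> l. tanh (g (e i) $ l)) (\<chi> l. tanh (g (e j) $ l)) / real CARD('h))"

text \<open>The CircuITS density p(y | Q, X) for query set I (query i at time qt i,
  channel qc i), targets y.\<close>
definition circuits_density ::
  "nat \<Rightarrow> nat \<Rightarrow> (real \<Rightarrow> 'a) \<Rightarrow> ('a \<times> 'b \<Rightarrow> nat \<Rightarrow> 'e) \<Rightarrow> ('x \<Rightarrow> nat \<Rightarrow> 'b)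
   \<Rightarrow> ('e \<Rightarrow> real^'h) \<Rightarrow> ('e \<Rightarrow> 't) \<Rightarrow> ('t \<Rightarrow> real \<Rightarrow> real) \<Rightarrow> ('t \<Rightarrow> real \<Rightarrow> real)
   \<Rightarrow> ('x \<Rightarrow> nat \<Rightarrow> real) \<Rightarrow> ('x \<Rightarrow> nat \<Rightarrow> nat \<times> nat \<Rightarrow> nat \<Rightarrow> real)
   \<Rightarrow> 'x \<Rightarrow> ('q \<Rightarrow> real) \<Rightarrow> ('q \<Rightarrow> nat) \<Rightarrow> 'q set \<Rightarrow> ('q \<Rightarrow> real) \<Rightarrow> real" where
  "circuits_density C K \<phi> Proj htil g thetaMap Fc fd wroot W X qt qc I y =
     (let e = (\<lambda>k i. emb \<phi> Proj htil X k (qt i) (qc i));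
          leaf = (\<lambda>c k. copula_leaf {i\<in>I. qc i = c}
                           (\<lambda>i. Fc (thetaMap (e k i))) (\<lambda>i. fd (thetaMap (e k i)))
                           (corrR g (e k)) y)
      in (\<Sum>k\<in>{1..K}. wroot X k * circ K (W X) leaf C k))"

end

(*
  The CircuITS density is a mixture of circuits that are multilinear in their leaves, and every
  product node multiplies leaves of distinct channels. Hence integrating out a single target y_a of
  channel c only integrates the leaves p_{c,k}, and since everything is nonnegative the integral
  commutes with the sums and products of the circuit. Each such leaf is a Gaussian-copula density,
  and it marginalises to the Gaussian-copula leaf of the remaining queries: in the normal scores
  z_i = Phi^-1(F_i(y_i)) the exponent is quadratic in z_a, so after the substitution t = z_a the
  integral over y_a is a one-dimensional Gaussian integral; completing the square leaves the Schur
  complement of the precision matrix R^-1, which is the inverse of the restricted correlation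
  matrix, and Cramer's rule turns the normalising constant into the ratio of the determinants.
  All of this needs R positive definite, which holds because R = V V^T / H + D with D diagonal and
  positive, as |tanh| < 1. Integrating out the targets in A one at a time gives the theorem.
*)

theory Submission
  imports Defs
begin

section \<open>Smooth distribution functions and the standard normal CDF\<close>

locale smooth_cdf =
  fixes F f :: "real \<Rightarrow> real"
  assumes strict_mono: "strict_mono F"
    and has_derivative: "\<And>x. (F has_real_derivative f x) (at x)"
    and density_continuous: "continuous_on UNIV f"
    and tendsto_at_bot: "(F \<longlongrightarrow> 0) at_bot"
    and tendsto_at_top: "(F \<longlongrightarrow> 1) at_top"
begin

lemma isCont: "isCont F x"
  using has_derivative DERIV_isCont by blast

lemma density_measurable: "f \<in> borel_measurable borel"
  by (rule borel_measurable_continuous_onI[OF density_continuous])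

lemma density_nonneg: "0 \<le> f x"
  by (rule mono_on_imp_deriv_nonneg[of UNIV F, OF _ has_derivative])
     (auto simp: mono_on_def intro: strict_mono_mono[OF strict_mono, THEN monoD])

lemma pos: "0 < F x"
proof -
  have "0 \<le> F (x - 1)"
    by (rule tendsto_upperbound[OF tendsto_at_bot])
       (auto simp: eventually_at_bot_linorder intro!: exI[of _ "x - 1"]
             intro: strict_mono_mono[OF strict_mono, THEN monoD])
  then show ?thesis
    using strict_monoD[OF strict_mono, of "x - 1" x] by simp
qed

lemma less_1: "F x < 1"
proof -
  have "F (x + 1) \<le> 1"
    by (rule tendsto_lowerbound[OF tendsto_at_top])
       (auto simp: eventually_at_top_linorder intro!: exI[of _ "x + 1"]
             intro: strict_mono_mono[OF strict_mono, THEN monoD])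
  then show ?thesis
    using strict_monoD[OF strict_mono, of x "x + 1"] by simp
qed

lemma ex_eq:
  assumes "0 < u" "u < 1"
  shows "\<exists>x. F x = u"
proof -
  obtain a where a: "F a < u"
    using eventually_happens'[OF _ order_tendstoD(2)[OF tendsto_at_bot assms(1)]] by auto
  obtain b where b: "u < F b"
    using eventually_happens'[OF _ order_tendstoD(1)[OF tendsto_at_top assms(2)]] by auto
  have "a \<le> b"
    using a b strict_monoD[OF strict_mono, of b a] by (cases "a \<le> b") auto
  then show ?thesis
    using IVT[of F a u b] a b isCont by auto
qed

end

lemma std_normal_density_continuous: "continuous_on S std_normal_density"
  unfolding std_normal_density_def[abs_def] by (intro continuous_intros) auto

lemma integrable_std_normal_density_indicator:
  "S \<in> sets borel \<Longrightarrow> integrable lborel (\<lambda>t. indicator S t * std_normal_density t)"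
  using integrable_real_mult_indicator[of S lborel std_normal_density] integrable_normal_density[of 1 0]
  by (simp add: mult.commute)

lemma Phi_diff_eq_integral:
  assumes "x \<le> y"
  shows "Phi y - Phi x = integral {x..y} std_normal_density"
proof -
  have "Phi y - Phi x
      = (\<integral>t. indicator {..y} t * std_normal_density t - indicator {..x} t * std_normal_density t \<partial>lborel)"
    unfolding Phi_def
    by (rule Bochner_Integration.integral_diff[symmetric])
       (auto intro: integrable_std_normal_density_indicator)
  also have "\<dots> = (\<integral>t. indicator {x..y} t * std_normal_density t \<partial>lborel)"
  proof (rule integral_cong_AE)
    show "AE t in lborel. indicator {..y} t * std_normal_density t - indicator {..x} t * std_normal_density t
        = indicator {x..y} t * std_normal_density t"
      using AE_lborel_singleton[of x]
      by eventually_elim (use assms in \<open>auto split: split_indicator\<close>)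
  qed auto
  also have "\<dots> = integral {x..y} std_normal_density"
    using set_borel_integral_eq_integral(2)[of "{x..y}" std_normal_density]
      integrable_std_normal_density_indicator[of "{x..y}"]
    by (simp add: set_lebesgue_integral_def set_integrable_def mult.commute)
  finally show ?thesis .
qed

lemma Phi_has_real_derivative: "(Phi has_real_derivative std_normal_density x) (at x)"
proof -
  have "((\<lambda>t. integral {x-1..t} std_normal_density) has_real_derivative std_normal_density x)
      (at x within {x-1..x+1})"
    by (rule integral_has_real_derivative[OF std_normal_density_continuous]) auto
  then have "((\<lambda>t. Phi (x-1) + integral {x-1..t} std_normal_density) has_real_derivative std_normal_density x)
      (at x within {x-1..x+1})"
    by (auto intro!: derivative_eq_intros)
  then have "((\<lambda>t. Phi (x-1) + integral {x-1..t} std_normal_density) has_real_derivative std_normal_density x)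
      (at x)"
    by (subst (asm) at_within_interior) auto
  then show ?thesis
  proof (rule has_field_derivative_transform_within_open[of _ _ _ "{x-1<..}"])
    show "Phi (x-1) + integral {x-1..t} std_normal_density = Phi t" if "t \<in> {x-1<..}" for t
      using Phi_diff_eq_integral[of "x-1" t] that by simp
  qed auto
qed

lemma Phi_eq_cdf: "Phi x = cdf std_normal_distribution x"
proof -
  have "emeasure std_normal_distribution {..x}
      = (\<integral>\<^sup>+ t. ennreal (indicator {..x} t * std_normal_density t) \<partial>lborel)"
    by (subst emeasure_density) (auto intro!: nn_integral_cong split: split_indicator)
  also have "\<dots> = ennreal (Phi x)"
    unfolding Phi_def
    by (rule nn_integral_eq_integral) (auto intro: integrable_std_normal_density_indicator)
  finally show ?thesis
    unfolding cdf_def measure_def by (simp add: Phi_def)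
qed

interpretation Phi: smooth_cdf Phi std_normal_density
proof
  interpret N: real_distribution std_normal_distribution
    by (rule real_dist_normal_dist)
  show "strict_mono Phi"
  proof (rule strict_monoI)
    fix x y :: real
    assume "x < y"
    then show "Phi x < Phi y"
    proof (rule DERIV_pos_imp_increasing)
      show "\<exists>d. (Phi has_real_derivative d) (at t) \<and> 0 < d" for t
        by (rule exI[of _ "std_normal_density t"]) (simp add: Phi_has_real_derivative normal_density_pos)
    qed
  qed
  show "(Phi \<longlongrightarrow> 0) at_bot"
    using N.cdf_lim_at_bot unfolding Phi_eq_cdf[abs_def] .
  show "(Phi \<longlongrightarrow> 1) at_top"
    using N.cdf_lim_at_top_prob unfolding Phi_eq_cdf[abs_def] .
  show "(Phi has_real_derivative std_normal_density x) (at x)" for x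
    by (rule Phi_has_real_derivative)
  show "continuous_on UNIV std_normal_density"
    by (rule std_normal_density_continuous)
qed

lemma Phi_inv_Phi: "Phi_inv (Phi z) = z"
  unfolding Phi_inv_def
  by (rule the_equality) (simp_all add: strict_mono_eq[OF Phi.strict_mono])

lemma Phi_Phi_inv:
  assumes "0 < u" "u < 1"
  shows "Phi (Phi_inv u) = u"
  using Phi.ex_eq[OF assms] Phi_inv_Phi by auto

lemma Phi_inv_has_real_derivative:
  assumes "0 < u" "u < 1"
  shows "(Phi_inv has_real_derivative inverse (std_normal_density (Phi_inv u))) (at u)"
proof (rule DERIV_inverse_function[where f = Phi and a = 0 and b = 1])
  obtain z where z: "Phi z = u"
    using Phi.ex_eq[OF assms] by blast
  have "isCont Phi_inv (Phi z)"
    by (rule isCont_inverse_function[of 1]) (simp_all add: Phi_inv_Phi Phi.isCont)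
  then show "isCont Phi_inv u"
    using z by simp
  show "std_normal_density (Phi_inv u) \<noteq> 0"
    using normal_density_pos[of 1 0 "Phi_inv u"] by simp
qed (use assms Phi_has_real_derivative Phi_Phi_inv in simp_all)

lemma Phi_le_iff_le_Phi_inv:
  assumes "0 < u" "u < 1"
  shows "Phi z \<le> u \<longleftrightarrow> z \<le> Phi_inv u"
  using strict_mono_less_eq[OF Phi.strict_mono, of z "Phi_inv u"] Phi_Phi_inv[OF assms] by simp

section \<open>A Gaussian integral in normal scores\<close>

lemma std_normal_density_complete_square:
  fixes p b z :: real
  assumes p: "0 < p"
  shows "exp (b\<^sup>2 / (2 * p)) * std_normal_density (sqrt p * (z + b / p)) / std_normal_density z
       = exp (- ((p - 1) * z\<^sup>2 + 2 * b * z) / 2)"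
proof -
  have "(sqrt p * (z + b / p))\<^sup>2 = p * z\<^sup>2 + 2 * b * z + b\<^sup>2 / p"
    using p by (simp add: power_mult_distrib power2_eq_square field_simps)
  then have "exp (b\<^sup>2 / (2 * p)) * std_normal_density (sqrt p * (z + b / p)) / std_normal_density z
      = exp (b\<^sup>2 / (2 * p)) * exp (- (p * z\<^sup>2 + 2 * b * z + b\<^sup>2 / p) / 2) / exp (- z\<^sup>2 / 2)"
    by (simp add: std_normal_density_def)
  also have "\<dots> = exp (b\<^sup>2 / (2 * p) + - (p * z\<^sup>2 + 2 * b * z + b\<^sup>2 / p) / 2 - - z\<^sup>2 / 2)"
    by (simp only: exp_add exp_diff)
  also have "b\<^sup>2 / (2 * p) + - (p * z\<^sup>2 + 2 * b * z + b\<^sup>2 / p) / 2 - - z\<^sup>2 / 2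
      = - ((p - 1) * z\<^sup>2 + 2 * b * z) / 2"
    using p by (simp add: field_simps)
  finally show ?thesis .
qed

lemma nn_integral_real_line_FTC:
  fixes f G :: "real \<Rightarrow> real"
  assumes f_measurable [measurable]: "f \<in> borel_measurable borel"
    and G_deriv: "\<And>x. (G has_real_derivative f x) (at x)"
    and f_nonneg: "\<And>x. 0 \<le> f x"
    and G_bot: "(G \<longlongrightarrow> a) at_bot" and G_top: "(G \<longlongrightarrow> b) at_top"
  shows "(\<integral>\<^sup>+ x. ennreal (f x) \<partial>lborel) = ennreal (b - a)"
proof -
  let ?f = "\<lambda>(n::nat) x. ennreal (f x) * indicator {- real n..real n} x"
  have "(\<lambda>n. integral\<^sup>N lborel (?f n)) \<longlonglongrightarrow> (\<integral>\<^sup>+ x. ennreal (f x) \<partial>lborel)"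
  proof (rule nn_integral_LIMSEQ)
    show "incseq ?f"
      by (auto simp: incseq_def le_fun_def split: split_indicator)
    fix x
    obtain n where "\<bar>x\<bar> < real n"
      using reals_Archimedean2 by blast
    then have "eventually (\<lambda>i. ?f i x = ennreal (f x)) sequentially"
      by (auto simp: eventually_sequentially split: split_indicator intro!: exI[of _ n])
    then show "(\<lambda>i. ?f i x) \<longlonglongrightarrow> ennreal (f x)"
      by (rule tendsto_eventually)
  qed measurable
  moreover have "integral\<^sup>N lborel (?f n) = ennreal (G (real n) - G (- real n))" for n
    by (rule nn_integral_FTC_Icc) (use G_deriv f_nonneg in auto)
  moreover have "(\<lambda>n. ennreal (G (real n) - G (- real n))) \<longlonglongrightarrow> ennreal (b - a)"
    by (intro tendsto_ennrealI tendsto_diff filterlim_compose[OF G_top] filterlim_compose[OF G_bot]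
        filterlim_real_sequentially filterlim_compose[OF filterlim_uminus_at_bot_at_top])
  ultimately show ?thesis
    using LIMSEQ_unique by auto
qed

context smooth_cdf
begin

abbreviation score :: "real \<Rightarrow> real" where
  "score t \<equiv> Phi_inv (F t)"

lemma score_has_real_derivative:
  "(score has_real_derivative f t / std_normal_density (score t)) (at t)"
  using DERIV_chain2[OF Phi_inv_has_real_derivative[OF pos less_1] has_derivative]
  by (simp add: divide_inverse mult.commute)

lemma score_continuous_on: "continuous_on S score"
  using score_has_real_derivative DERIV_isCont by (blast intro: continuous_at_imp_continuous_on)

lemma score_measurable: "score \<in> borel_measurable borel"
  by (rule borel_measurable_continuous_onI[OF score_continuous_on])

lemma filterlim_score_at_top: "filterlim score at_top at_top"
  unfolding filterlim_at_top
proof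
  fix z
  show "eventually (\<lambda>t. z \<le> score t) at_top"
    using order_tendstoD(1)[OF tendsto_at_top Phi.less_1[of z]]
    by eventually_elim (simp add: Phi_le_iff_le_Phi_inv[OF pos less_1, symmetric])
qed

lemma filterlim_score_at_bot: "filterlim score at_bot at_bot"
  unfolding filterlim_at_bot
proof
  fix z
  have "eventually (\<lambda>t. F t < Phi z) at_bot"
    using order_tendstoD(2)[OF tendsto_at_bot Phi.pos[of z]] .
  then show "eventually (\<lambda>t. score t \<le> z) at_bot"
  proof eventually_elim
    case (elim t)
    then show ?case
      using Phi_le_iff_le_Phi_inv[OF pos less_1, of z t] by linarith
  qed
qed

text \<open>In the variable \<open>z = score t\<close> the integrand is a Gaussian density; completing the square
  gives the antiderivative \<open>exp (b\<^sup>2 / (2 * p)) / sqrt p * Phi (sqrt p * (score t + b / p))\<close>.\<close>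

lemma nn_integral_score_gaussian:
  assumes p: "0 < p"
  shows "(\<integral>\<^sup>+ t. ennreal (f t * exp (- ((p - 1) * (score t)\<^sup>2 + 2 * b * score t) / 2)) \<partial>lborel)
       = ennreal (exp (b\<^sup>2 / (2 * p)) / sqrt p)"
proof -
  define c where "c = exp (b\<^sup>2 / (2 * p)) / sqrt p"
  define w where "w t = sqrt p * (score t + b / p)" for t
  have "((\<lambda>t. c * Phi (w t)) has_real_derivative f t * exp (- ((p - 1) * (score t)\<^sup>2 + 2 * b * score t) / 2))
      (at t)" for t
    unfolding w_def
    by (rule derivative_eq_intros Phi_has_real_derivative score_has_real_derivative refl
        DERIV_chain2[OF Phi_has_real_derivative])+
       (simp only: std_normal_density_complete_square[OF p, of b "score t", symmetric],
        use p in \<open>simp add: c_def field_simps\<close>)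
  moreover have "((\<lambda>t. c * Phi (w t)) \<longlongrightarrow> c * 1) at_top"
  proof (intro tendsto_mult tendsto_const filterlim_compose[OF Phi.tendsto_at_top])
    show "filterlim w at_top at_top"
      unfolding w_def using p
      by (intro filterlim_tendsto_pos_mult_at_top[OF tendsto_const])
         (auto simp: add.commute[of "score _"] filterlim_tendsto_add_at_top_iff[OF tendsto_const]
           filterlim_score_at_top)
  qed
  moreover have "((\<lambda>t. c * Phi (w t)) \<longlongrightarrow> c * 0) at_bot"
  proof (intro tendsto_mult tendsto_const filterlim_compose[OF Phi.tendsto_at_bot])
    show "filterlim w at_bot at_bot"
      unfolding w_def using p
      by (intro filterlim_tendsto_pos_mult_at_bot[OF tendsto_const])
         (auto simp: add.commute[of "score _"] filterlim_tendsto_add_at_bot_iff[OF tendsto_const]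
           filterlim_score_at_bot)
  qed
  ultimately show ?thesis
    using nn_integral_real_line_FTC[of _ "\<lambda>t. c * Phi (w t)" 0 c] density_measurable score_measurable
      density_nonneg
    by (simp add: c_def)
qed

end

section \<open>Quadratic forms and positive definite matrices\<close>

definition quad_form :: "'i set \<Rightarrow> ('i \<Rightarrow> 'i \<Rightarrow> real) \<Rightarrow> ('i \<Rightarrow> real) \<Rightarrow> real" where
  "quad_form J M x = (\<Sum>i\<in>J. \<Sum>j\<in>J. x i * M i j * x j)"

definition pos_def_on :: "'i set \<Rightarrow> ('i \<Rightarrow> 'i \<Rightarrow> real) \<Rightarrow> bool" where
  "pos_def_on J R \<longleftrightarrow> (\<forall>i\<in>J. \<forall>j\<in>J. R i j = R j i) \<and> (\<forall>x. (\<exists>i\<in>J. x i \<noteq> 0) \<longrightarrow> 0 < quad_form J R x)"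

definition is_inv_on :: "'i set \<Rightarrow> ('i \<Rightarrow> 'i \<Rightarrow> real) \<Rightarrow> ('i \<Rightarrow> 'i \<Rightarrow> real) \<Rightarrow> bool" where
  "is_inv_on J R S \<longleftrightarrow> (\<forall>i\<in>J. \<forall>j\<in>J. (\<Sum>k\<in>J. R i k * S k j) = (if i = j then 1 else 0))
                      \<and> (\<forall>i j. i \<notin> J \<or> j \<notin> J \<longrightarrow> S i j = 0)"

lemma quad_form_eq: "quad_form J M x = (\<Sum>i\<in>J. x i * (\<Sum>j\<in>J. M i j * x j))"
  by (simp add: quad_form_def sum_distrib_left mult.assoc)

lemma quad_form_cong:
  "(\<And>i j. i \<in> J \<Longrightarrow> j \<in> J \<Longrightarrow> M i j = N i j) \<Longrightarrow> (\<And>i. i \<in> J \<Longrightarrow> x i = y i)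
    \<Longrightarrow> quad_form J M x = quad_form J N y"
  unfolding quad_form_def by (intro sum.cong refl) auto

lemma quad_form_add:
  "quad_form J (\<lambda>i j. M i j + N i j) x = quad_form J M x + quad_form J N x"
  by (simp add: quad_form_def algebra_simps sum.distrib)

lemma quad_form_divide:
  "quad_form J (\<lambda>i j. M i j / c) x = quad_form J M x / c"
  by (simp add: quad_form_def sum_divide_distrib)

lemma quad_form_diag:
  "finite J \<Longrightarrow> quad_form J (\<lambda>i j. if i = j then d i else 0) x = (\<Sum>i\<in>J. (x i)\<^sup>2 * d i)"
  by (simp add: quad_form_def if_distrib[of "\<lambda>y. _ * y"] power2_eq_square mult_ac cong: if_cong)

lemma quad_form_gram:
  fixes v :: "'i \<Rightarrow> 'a :: real_inner"
  shows "quad_form J (\<lambda>i j. inner (v i) (v j)) x = inner (\<Sum>i\<in>J. x i *\<^sub>R v i) (\<Sum>i\<in>J. x i *\<^sub>R v i)"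
  by (simp add: quad_form_def inner_sum_left inner_sum_right sum_distrib_left mult_ac inner_commute)

lemma quad_form_remove:
  assumes fin: "finite J" and a: "a \<in> J" and sym: "\<And>i j. M i j = M j i"
  shows "quad_form J M z
       = M a a * (z a)\<^sup>2 + 2 * (\<Sum>j\<in>J - {a}. M a j * z j) * z a + quad_form (J - {a}) M z"
proof -
  have row: "(\<Sum>j\<in>J. z i * M i j * z j) = z i * M i a * z a + (\<Sum>j\<in>J - {a}. z i * M i j * z j)" for i
    by (rule sum.remove[OF fin a])
  have "quad_form J M z = (\<Sum>j\<in>J. z a * M a j * z j) + (\<Sum>i\<in>J - {a}. \<Sum>j\<in>J. z i * M i j * z j)"
    unfolding quad_form_def by (rule sum.remove[OF fin a])
  also have "\<dots> = M a a * (z a)\<^sup>2 + (\<Sum>j\<in>J - {a}. z a * M a j * z j) + (\<Sum>i\<in>J - {a}. z i * M i a * z a)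
      + quad_form (J - {a}) M z"
    unfolding row by (simp add: quad_form_def sum.distrib power2_eq_square mult_ac)
  also have "(\<Sum>i\<in>J - {a}. z i * M i a * z a) = (\<Sum>j\<in>J - {a}. z a * M a j * z j)"
    by (intro sum.cong refl) (simp add: sym mult_ac)
  finally show ?thesis
    by (simp add: sum_distrib_left sum_distrib_right mult_ac)
qed

lemma quad_form_rank_one_update:
  "quad_form J (\<lambda>i j. M i j - u i * u j / p) z = quad_form J M z - (\<Sum>j\<in>J. u j * z j)\<^sup>2 / p"
  by (simp add: quad_form_def algebra_simps sum_subtractf power2_eq_square sum_product sum_divide_distrib)

lemma pos_def_onD:
  assumes "pos_def_on J R"
  shows pos_def_on_sym: "i \<in> J \<Longrightarrow> j \<in> J \<Longrightarrow> R i j = R j i"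
    and pos_def_on_quad_form_pos: "i \<in> J \<Longrightarrow> x i \<noteq> 0 \<Longrightarrow> 0 < quad_form J R x"
  using assms unfolding pos_def_on_def by blast+

lemma pos_def_on_subset:
  assumes fin: "finite J" and pd: "pos_def_on J R" and sub: "J' \<subseteq> J"
  shows "pos_def_on J' R"
  unfolding pos_def_on_def
proof (intro conjI allI impI ballI)
  show "R i j = R j i" if "i \<in> J'" "j \<in> J'" for i j
    using pos_def_on_sym[OF pd] that sub by blast
next
  fix x :: "'a \<Rightarrow> real"
  assume "\<exists>i\<in>J'. x i \<noteq> 0"
  then obtain i where i: "i \<in> J'" "x i \<noteq> 0" by blast
  define x' where "x' i = (if i \<in> J' then x i else 0)" for i
  have "quad_form J R x' = quad_form J' R x"
    unfolding quad_form_def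
    by (subst sum.mono_neutral_right[OF fin sub], simp add: x'_def,
        intro sum.cong refl sum.mono_neutral_cong_right[OF fin sub]) (auto simp: x'_def)
  moreover have "0 < quad_form J R x'"
    using i sub by (intro pos_def_on_quad_form_pos[OF pd, of i]) (auto simp: x'_def)
  ultimately show "0 < quad_form J' R x" by simp
qed

lemma is_inv_on_unique:
  assumes pd: "pos_def_on J R" and S: "is_inv_on J R S" and S': "is_inv_on J R S'"
  shows "S = S'"
proof (intro ext)
  fix k j
  show "S k j = S' k j"
  proof (cases "k \<in> J \<and> j \<in> J")
    case True
    define x where "x m = S m j - S' m j" for m
    have "(\<Sum>m\<in>J. R i m * x m) = 0" if "i \<in> J" for i
      using S S' that True by (simp add: is_inv_on_def x_def right_diff_distrib sum_subtractf)
    then have "quad_form J R x = 0"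
      by (simp add: quad_form_eq)
    then show ?thesis
      using pos_def_on_quad_form_pos[OF pd, of k x] True by (auto simp: x_def)
  qed (use S S' in \<open>auto simp: is_inv_on_def\<close>)
qed

text \<open>Bordering: with \<open>u = e\<^sub>a - P R(\<cdot>, a)\<close>, \<open>v = e\<^sub>a - R(a, \<cdot>) P\<close> and the Schur complement
  \<open>s = (R u) a = u\<^sup>T R u > 0\<close>, the inverse on \<open>insert a J\<close> is \<open>P + u v\<^sup>T / s\<close>.\<close>

lemma is_inv_on_insert:
  assumes fin: "finite J" and a: "a \<notin> J" and pd: "pos_def_on (insert a J) R"
    and P: "is_inv_on J R P"
  shows "\<exists>S. is_inv_on (insert a J) R S"
proof -
  have P_right: "(\<Sum>k\<in>J. R i k * P k j) = (if i = j then 1 else 0)" if "i \<in> J" "j \<in> J" for i j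
    using P that by (simp add: is_inv_on_def)
  have P_out: "P i j = 0" if "i \<notin> J \<or> j \<notin> J" for i j
    using P that by (simp add: is_inv_on_def)
  define u where "u i = (if i = a then 1 else - (\<Sum>k\<in>J. P i k * R k a))" for i
  define v where "v j = (if j = a then 1 else - (\<Sum>k\<in>J. R a k * P k j))" for j
  define s where "s = (\<Sum>k\<in>insert a J. R a k * u k)"
  have Ru: "(\<Sum>k\<in>insert a J. R i k * u k) = 0" if i: "i \<in> J" for i
  proof -
    have "(\<Sum>k\<in>J. R i k * (\<Sum>m\<in>J. P k m * R m a)) = (\<Sum>m\<in>J. (\<Sum>k\<in>J. R i k * P k m) * R m a)"
      by (simp add: sum_distrib_left sum_distrib_right mult.assoc) (rule sum.swap)
    also have "\<dots> = R i a"
      using i fin by (simp add: P_right if_distrib[of "\<lambda>x. x * _"] cong: if_cong)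
    moreover have "(\<Sum>k\<in>J. R i k * u k) = (\<Sum>k\<in>J. - (R i k * (\<Sum>m\<in>J. P k m * R m a)))"
      using a by (intro sum.cong) (auto simp: u_def)
    ultimately show ?thesis
      using fin a by (simp add: u_def sum_negf)
  qed
  have "quad_form (insert a J) R u = s"
    using fin a Ru by (simp add: quad_form_eq s_def u_def)
  then have s_pos: "0 < s"
    using pos_def_on_quad_form_pos[OF pd, of a u] by (simp add: u_def)
  have RP: "(\<Sum>k\<in>insert a J. R i k * P k j)
      = (if j \<in> J then if i \<in> J then (if i = j then 1 else 0) else (\<Sum>k\<in>J. R a k * P k j) else 0)"
    if "i \<in> insert a J" for i j
    using that fin a P_right P_out by (auto intro: sum.neutral)
  define S where "S i j = P i j + u i * v j / s" for i j
  have S_right: "(\<Sum>k\<in>insert a J. R i k * S k j) = (if i = j then 1 else 0)"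
    if i: "i \<in> insert a J" and j: "j \<in> insert a J" for i j
  proof -
    have "(\<Sum>k\<in>insert a J. R i k * S k j)
        = (\<Sum>k\<in>insert a J. R i k * P k j) + (\<Sum>k\<in>insert a J. R i k * u k) * v j / s"
      by (simp add: S_def distrib_left sum.distrib sum_distrib_right sum_divide_distrib mult.assoc)
    then show ?thesis
      using RP[OF i, of j] Ru s_pos i j a by (cases "i = a"; cases "j = a") (auto simp: v_def s_def)
  qed
  have S_out: "S i j = 0" if "i \<notin> insert a J \<or> j \<notin> insert a J" for i j
    using that by (auto simp: S_def P_out u_def v_def)
  have "is_inv_on (insert a J) R S"
    unfolding is_inv_on_def using S_right S_out by blast
  then show ?thesis by blast
qed

lemma is_inv_on_exists:
  assumes "finite J" "pos_def_on J R"
  shows "\<exists>S. is_inv_on J R S"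
  using assms
proof (induction J rule: finite_induct)
  case empty
  show ?case
    by (rule exI[of _ "\<lambda>_ _. 0"]) (simp add: is_inv_on_def)
next
  case (insert a J)
  have "pos_def_on J R"
    using pos_def_on_subset[OF _ insert.prems] insert.hyps by auto
  then obtain P where "is_inv_on J R P"
    using insert.IH by blast
  then show ?case
    using is_inv_on_insert[OF insert.hyps insert.prems] by blast
qed

lemma is_inv_on_inv_on:
  assumes "finite J" "pos_def_on J R"
  shows "is_inv_on J R (inv_on J R)"
proof -
  have "\<exists>!S. is_inv_on J R S"
    using is_inv_on_exists[OF assms] is_inv_on_unique[OF assms(2)] by blast
  then show ?thesis
    unfolding inv_on_def is_inv_on_def[symmetric] by (rule theI')
qed

lemma inv_on_eqI:
  assumes "finite J" "pos_def_on J R" "is_inv_on J R S"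
  shows "inv_on J R = S"
  using is_inv_on_unique[OF assms(2) is_inv_on_inv_on[OF assms(1,2)] assms(3)] .

context
  fixes J :: "'i set" and R :: "'i \<Rightarrow> 'i \<Rightarrow> real"
  assumes fin: "finite J" and pd: "pos_def_on J R"
begin

lemma inv_on_right:
  "i \<in> J \<Longrightarrow> j \<in> J \<Longrightarrow> (\<Sum>k\<in>J. R i k * inv_on J R k j) = (if i = j then 1 else 0)"
  using is_inv_on_inv_on[OF fin pd] by (simp add: is_inv_on_def)

lemma inv_on_outside: "i \<notin> J \<or> j \<notin> J \<Longrightarrow> inv_on J R i j = 0"
  using is_inv_on_inv_on[OF fin pd] by (simp add: is_inv_on_def)

lemma inv_on_sym: "inv_on J R i j = inv_on J R j i"
proof (cases "i \<in> J \<and> j \<in> J")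
  case True
  let ?P = "inv_on J R"
  have left: "(\<Sum>m\<in>J. ?P m i * R m k) = (if k = i then 1 else 0)" if "k \<in> J" for k
    using inv_on_right[OF that, of i] True pos_def_on_sym[OF pd] that
    by (simp add: mult.commute cong: sum.cong)
  have "(\<Sum>k\<in>J. (\<Sum>m\<in>J. ?P m i * R m k) * ?P k j) = (\<Sum>m\<in>J. ?P m i * (\<Sum>k\<in>J. R m k * ?P k j))"
    by (simp add: sum_distrib_left sum_distrib_right mult.assoc) (rule sum.swap)
  moreover have "(\<Sum>k\<in>J. (\<Sum>m\<in>J. ?P m i * R m k) * ?P k j) = ?P i j"
    using left True fin by (simp add: if_distrib[of "\<lambda>x. x * _"] cong: sum.cong if_cong)
  moreover have "(\<Sum>m\<in>J. ?P m i * (\<Sum>k\<in>J. R m k * ?P k j)) = ?P j i"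
    using inv_on_right True fin by (simp add: if_distrib[of "\<lambda>x. _ * x"] cong: sum.cong if_cong)
  ultimately show ?thesis by simp
qed (auto simp: inv_on_outside)

lemma inv_on_diag_pos:
  assumes a: "a \<in> J"
  shows "0 < inv_on J R a a"
proof -
  have "quad_form J R (\<lambda>m. inv_on J R m a) = inv_on J R a a"
    using fin a by (simp add: quad_form_eq inv_on_right if_distrib[of "\<lambda>x. _ * x"] cong: sum.cong if_cong)
  moreover obtain m where "m \<in> J" "inv_on J R m a \<noteq> 0"
  proof (rule ccontr)
    assume "\<not> thesis"
    then have "(\<Sum>k\<in>J. R a k * inv_on J R k a) = 0"
      by (intro sum.neutral) (auto intro: that)
    then show False
      using inv_on_right[OF a a] by simp
  qed
  ultimately show ?thesis
    using pos_def_on_quad_form_pos[OF pd, of m "\<lambda>m. inv_on J R m a"] by simp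
qed

end

lemma inv_on_remove:
  assumes fin: "finite J" and pd: "pos_def_on J R" and a: "a \<in> J"
  shows "inv_on (J - {a}) R = (\<lambda>i j. if i \<in> J - {a} \<and> j \<in> J - {a}
            then inv_on J R i j - inv_on J R i a * inv_on J R a j / inv_on J R a a else 0)"
proof (rule inv_on_eqI)
  show "finite (J - {a})" "pos_def_on (J - {a}) R"
    using fin pos_def_on_subset[OF fin pd] by auto
  let ?P = "inv_on J R"
  have p: "0 < ?P a a"
    by (rule inv_on_diag_pos[OF fin pd a])
  have split: "(\<Sum>k\<in>J - {a}. R i k * ?P k j) = (if i = j then 1 else 0) - R i a * ?P a j"
    if "i \<in> J" "j \<in> J" for i j
    using sum.remove[OF fin a, of "\<lambda>k. R i k * ?P k j"] inv_on_right[OF fin pd that] by simp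
  show "is_inv_on (J - {a}) R (\<lambda>i j. if i \<in> J - {a} \<and> j \<in> J - {a} then ?P i j - ?P i a * ?P a j / ?P a a else 0)"
    unfolding is_inv_on_def
  proof (intro conjI allI impI ballI)
    fix i j
    assume i: "i \<in> J - {a}" and j: "j \<in> J - {a}"
    have "(\<Sum>k\<in>J - {a}. R i k * (if k \<in> J - {a} \<and> j \<in> J - {a} then ?P k j - ?P k a * ?P a j / ?P a a else 0))
        = (\<Sum>k\<in>J - {a}. R i k * ?P k j - R i k * ?P k a * (?P a j / ?P a a))"
      using j by (intro sum.cong) (auto simp: algebra_simps)
    also have "\<dots> = (\<Sum>k\<in>J - {a}. R i k * ?P k j) - (\<Sum>k\<in>J - {a}. R i k * ?P k a) * (?P a j / ?P a a)"
      by (simp only: sum_subtractf sum_distrib_right)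
    also have "\<dots> = (if i = j then 1 else 0)"
      using split[of i j] split[of i a] i j a p by simp
    finally show "(\<Sum>k\<in>J - {a}. R i k * (if k \<in> J - {a} \<and> j \<in> J - {a}
        then ?P k j - ?P k a * ?P a j / ?P a a else 0)) = (if i = j then 1 else 0)" .
  qed auto
qed

section \<open>Determinants on finite index sets\<close>

definition replace_col :: "('i \<Rightarrow> 'i \<Rightarrow> real) \<Rightarrow> 'i \<Rightarrow> ('i \<Rightarrow> real) \<Rightarrow> 'i \<Rightarrow> 'i \<Rightarrow> real" where
  "replace_col M a c i j = (if j = a then c i else M i j)"

lemma det_on_cong:
  assumes "\<And>i j. i \<in> J \<Longrightarrow> j \<in> J \<Longrightarrow> M i j = N i j"
  shows "det_on J M = det_on J N"
  unfolding det_on_def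
  by (intro sum.cong refl arg_cong[where f = "\<lambda>x. _ * x"] prod.cong)
     (use assms permutes_in_image in fastforce)

lemma det_on_equal_cols:
  assumes fin: "finite J" and a: "a \<in> J" and b: "b \<in> J" and ab: "a \<noteq> b"
    and eq: "\<And>i. i \<in> J \<Longrightarrow> M i a = M i b"
  shows "det_on J M = 0"
proof -
  let ?t = "Transposition.transpose a b"
  let ?f = "\<lambda>p. of_int (sign p) * (\<Prod>i\<in>J. M i (p i))"
  have t: "?t permutes J"
    using a b by (rule permutes_swap_id)
  have "det_on J M = (\<Sum>p | p permutes J. ?f (?t \<circ> p))"
    unfolding det_on_def by (rule setum_permutations_compose_left[OF t])
  also have "\<dots> = (\<Sum>p | p permutes J. - ?f p)"
  proof (rule sum.cong[OF refl])
    fix p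
    assume "p \<in> {p. p permutes J}"
    then have p: "p permutes J" by simp
    have "sign (?t \<circ> p) = - sign p"
      using sign_compose[OF permutes_imp_permutation[OF fin t] permutes_imp_permutation[OF fin p]]
      by (simp add: sign_swap_id ab)
    moreover have "(\<Prod>i\<in>J. M i ((?t \<circ> p) i)) = (\<Prod>i\<in>J. M i (p i))"
      using eq permutes_in_image[OF p] by (intro prod.cong) (auto simp: Transposition.transpose_def)
    ultimately show "?f (?t \<circ> p) = - ?f p" by simp
  qed
  also have "\<dots> = - det_on J M"
    unfolding det_on_def by (simp add: sum_negf)
  finally show ?thesis by simp
qed

lemma prod_replace_col:
  assumes fin: "finite J" and p: "p permutes J" and a: "a \<in> J"
  shows "(\<Prod>i\<in>J. replace_col M a c i (p i)) = c (inv p a) * (\<Prod>i\<in>J - {inv p a}. M i (p i))"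
proof -
  have "inv p a \<in> J"
    using a permutes_in_image[OF permutes_inv[OF p]] by simp
  then have "(\<Prod>i\<in>J. replace_col M a c i (p i))
      = replace_col M a c (inv p a) (p (inv p a)) * (\<Prod>i\<in>J - {inv p a}. replace_col M a c i (p i))"
    by (rule prod.remove[OF fin])
  also have "(\<Prod>i\<in>J - {inv p a}. replace_col M a c i (p i)) = (\<Prod>i\<in>J - {inv p a}. M i (p i))"
    using permutes_inverses[OF p] by (intro prod.cong) (auto simp: replace_col_def)
  finally show ?thesis
    by (simp add: replace_col_def permutes_inverses[OF p])
qed

lemma det_on_replace_col_sum:
  assumes fin: "finite J" and a: "a \<in> J"
  shows "det_on J (replace_col M a (\<lambda>i. \<Sum>k\<in>K. c k * v k i))
       = (\<Sum>k\<in>K. c k * det_on J (replace_col M a (v k)))"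
proof -
  let ?Q = "\<lambda>p. \<Prod>i\<in>J - {inv p a}. M i (p i)"
  have "det_on J (replace_col M a (\<lambda>i. \<Sum>k\<in>K. c k * v k i))
      = (\<Sum>p | p permutes J. \<Sum>k\<in>K. c k * (of_int (sign p) * (v k (inv p a) * ?Q p)))"
    unfolding det_on_def
    by (intro sum.cong refl)
       (simp add: prod_replace_col[OF fin _ a] sum_distrib_left sum_distrib_right mult_ac)
  also have "\<dots> = (\<Sum>k\<in>K. c k * (\<Sum>p | p permutes J. of_int (sign p) * (v k (inv p a) * ?Q p)))"
    by (subst sum.swap) (simp add: sum_distrib_left)
  also have "\<dots> = (\<Sum>k\<in>K. c k * det_on J (replace_col M a (v k)))"
    unfolding det_on_def by (intro sum.cong refl) (simp add: prod_replace_col[OF fin _ a])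
  finally show ?thesis .
qed

lemma det_on_replace_col_unit:
  assumes fin: "finite J" and a: "a \<notin> J"
  shows "det_on (insert a J) (replace_col M a (\<lambda>i. if i = a then 1 else 0)) = det_on J M"
proof -
  let ?N = "replace_col M a (\<lambda>i. if i = a then 1 else 0)"
  let ?f = "\<lambda>p. of_int (sign p) * (\<Prod>i\<in>insert a J. ?N i (p i))"
  let ?t = "Transposition.transpose a"
  have "det_on (insert a J) ?N = (\<Sum>b\<in>insert a J. \<Sum>q | q permutes J. ?f (?t b \<circ> q))"
    unfolding det_on_def by (rule sum_over_permutations_insert[OF fin a])
  also have "\<dots> = (\<Sum>q | q permutes J. ?f (?t a \<circ> q)) + (\<Sum>b\<in>J. \<Sum>q | q permutes J. ?f (?t b \<circ> q))"
    using fin a by simp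
  also have "(\<Sum>b\<in>J. \<Sum>q | q permutes J. ?f (?t b \<circ> q)) = 0"
  proof (intro sum.neutral ballI)
    fix b q
    assume b: "b \<in> J" and "q \<in> {q. q permutes J}"
    then have q: "q permutes J" by simp
    have "inv q b \<in> J" "q (inv q b) = b"
      using b permutes_in_image[OF permutes_inv[OF q]] permutes_inverses[OF q] by auto
    moreover from this have "inv q b \<noteq> a"
      using a by auto
    ultimately have "?N (inv q b) ((?t b \<circ> q) (inv q b)) = 0"
      by (simp add: replace_col_def)
    then show "?f (?t b \<circ> q) = 0"
      using fin \<open>inv q b \<in> J\<close> by (simp add: prod_zero_iff) blast
  qed
  also have "(\<Sum>q | q permutes J. ?f (?t a \<circ> q)) = det_on J M"
    unfolding det_on_def
  proof (intro sum.cong refl)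
    fix q
    assume "q \<in> {q. q permutes J}"
    then have q: "q permutes J" by simp
    have "(\<Prod>i\<in>J. ?N i (q i)) = (\<Prod>i\<in>J. M i (q i))"
      using a permutes_in_image[OF q] by (intro prod.cong) (auto simp: replace_col_def)
    then show "?f (?t a \<circ> q) = of_int (sign q) * (\<Prod>i\<in>J. M i (q i))"
      using fin a permutes_not_in[OF q a] by (simp add: replace_col_def)
  qed
  finally show ?thesis by simp
qed

lemma det_on_mult_inv_on_diag:
  assumes fin: "finite J" and pd: "pos_def_on J R" and a: "a \<in> J"
  shows "det_on J R * inv_on J R a a = det_on (J - {a}) R"
proof -
  let ?P = "inv_on J R"
  have "det_on (J - {a}) R = det_on J (replace_col R a (\<lambda>i. if i = a then 1 else 0))"
    using det_on_replace_col_unit[of "J - {a}" a R] fin a by (simp add: insert_absorb)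
  also have "\<dots> = det_on J (replace_col R a (\<lambda>i. \<Sum>k\<in>J. ?P k a * R i k))"
    by (rule det_on_cong) (auto simp: replace_col_def inv_on_right[OF fin pd _ a] mult.commute)
  also have "\<dots> = (\<Sum>k\<in>J. ?P k a * det_on J (replace_col R a (\<lambda>i. R i k)))"
    by (rule det_on_replace_col_sum[OF fin a])
  also have "\<dots> = ?P a a * det_on J (replace_col R a (\<lambda>i. R i a))"
  proof (rule sum.remove[OF fin a, THEN trans], simp, intro sum.neutral ballI)
    fix k
    assume "k \<in> J - {a}"
    then have "det_on J (replace_col R a (\<lambda>i. R i k)) = 0"
      by (intro det_on_equal_cols[OF fin a, of k]) (auto simp: replace_col_def)
    then show "?P k a * det_on J (replace_col R a (\<lambda>i. R i k)) = 0" by simp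
  qed
  also have "replace_col R a (\<lambda>i. R i a) = R"
    by (auto simp: replace_col_def fun_eq_iff)
  finally show ?thesis by simp
qed

lemma det_on_pos:
  assumes "finite J" "pos_def_on J R"
  shows "0 < det_on J R"
  using assms
proof (induction J rule: finite_induct)
  case empty
  show ?case by (simp add: det_on_def)
next
  case (insert a J)
  have "pos_def_on J R"
    using pos_def_on_subset[OF _ insert.prems] insert.hyps by auto
  then have "0 < det_on (insert a J) R * inv_on (insert a J) R a a"
    using det_on_mult_inv_on_diag[OF _ insert.prems, of a] insert by simp
  moreover have "0 < inv_on (insert a J) R a a"
    using inv_on_diag_pos[OF _ insert.prems, of a] insert.hyps by simp
  ultimately show ?case
    by (simp add: zero_less_mult_iff)
qed

section \<open>The correlation matrix is positive definite\<close>

lemma inner_tanh_vec_less_card: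
  fixes w :: "real^'h"
  shows "inner (\<chi> l. tanh (w $ l)) (\<chi> l. tanh (w $ l)) < real CARD('h)"
proof -
  have "inner (\<chi> l. tanh (w $ l)) (\<chi> l. tanh (w $ l)) = (\<Sum>l\<in>UNIV. (tanh (w $ l))\<^sup>2)"
    by (simp add: inner_vec_def power2_eq_square)
  also have "\<dots> < (\<Sum>l\<in>(UNIV::'h set). 1)"
    using tanh_real_bounds by (intro sum_strict_mono) (auto simp: abs_square_less_1 abs_less_iff)
  finally show ?thesis by simp
qed

lemma pos_def_on_corrR:
  fixes g :: "'e \<Rightarrow> real^'h" and e :: "'q \<Rightarrow> 'e"
  assumes fin: "finite J"
  shows "pos_def_on J (corrR g e)"
  unfolding pos_def_on_def
proof (intro conjI ballI allI impI)
  show "corrR g e i j = corrR g e j i" for i j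
    by (simp add: corrR_def inner_commute)
next
  fix x :: "'q \<Rightarrow> real"
  assume "\<exists>i\<in>J. x i \<noteq> 0"
  then obtain i where i: "i \<in> J" "x i \<noteq> 0" by blast
  define v :: "'q \<Rightarrow> real^'h" where "v i = (\<chi> l. tanh (g (e i) $ l))" for i
  define H where "H = real CARD('h)"
  define d where "d i = 1 - inner (v i) (v i) / H" for i
  have d: "0 < d i" for i
    using inner_tanh_vec_less_card[of "g (e i)"] by (simp add: d_def v_def H_def)
  have "corrR g e = (\<lambda>i j. inner (v i) (v j) / H + (if i = j then d i else 0))"
    by (auto simp: fun_eq_iff corrR_def v_def H_def d_def)
  then have "quad_form J (corrR g e) x
      = inner (\<Sum>i\<in>J. x i *\<^sub>R v i) (\<Sum>i\<in>J. x i *\<^sub>R v i) / H + (\<Sum>i\<in>J. (x i)\<^sup>2 * d i)"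
    using fin by (simp add: quad_form_add quad_form_divide quad_form_diag quad_form_gram)
  moreover have "0 < (\<Sum>i\<in>J. (x i)\<^sup>2 * d i)"
    using d i by (intro sum_pos2[OF fin i(1)]) (auto intro!: mult_nonneg_nonneg d[THEN less_imp_le])
  ultimately show "0 < quad_form J (corrR g e) x"
    by (simp add: H_def add_nonneg_pos)
qed

section \<open>Marginalising a Gaussian-copula leaf\<close>

abbreviation copula_exponent :: "'i set \<Rightarrow> ('i \<Rightarrow> 'i \<Rightarrow> real) \<Rightarrow> 'i \<Rightarrow> 'i \<Rightarrow> real" where
  "copula_exponent J R \<equiv> \<lambda>i j. inv_on J R i j - (if i = j then 1 else 0)"

lemma copula_leaf_eq:
  "copula_leaf J Fi fi R y = (\<Prod>i\<in>J. fi i (y i)) / sqrt (det_on J R)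
     * exp (- quad_form J (copula_exponent J R) (\<lambda>i. Phi_inv (Fi i (y i))) / 2)"
  by (simp add: copula_leaf_def quad_form_def det_on_def Let_def)

lemma copula_leaf_cong:
  "(\<And>i. i \<in> J \<Longrightarrow> y i = y' i) \<Longrightarrow> copula_leaf J Fi fi R y = copula_leaf J Fi fi R y'"
  unfolding copula_leaf_eq by (simp cong: prod.cong quad_form_cong)

lemma copula_leaf_nonneg:
  assumes "finite J" "pos_def_on J R" "\<And>i x. i \<in> J \<Longrightarrow> 0 \<le> fi i x"
  shows "0 \<le> copula_leaf J Fi fi R y"
  unfolding copula_leaf_eq using det_on_pos[OF assms(1,2)] assms(3)
  by (intro mult_nonneg_nonneg divide_nonneg_pos prod_nonneg) auto

lemma copula_leaf_measurable:
  assumes cdf: "\<And>i. i \<in> J \<Longrightarrow> smooth_cdf (Fi i) (fi i)"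
    and h: "\<And>i. i \<in> J \<Longrightarrow> (\<lambda>x. h x i) \<in> borel_measurable M"
  shows "(\<lambda>x. copula_leaf J Fi fi R (h x)) \<in> borel_measurable M"
proof -
  have "(\<lambda>x. fi i (h x i)) \<in> borel_measurable M" "(\<lambda>x. Phi_inv (Fi i (h x i))) \<in> borel_measurable M"
    if "i \<in> J" for i
    using measurable_compose[OF h[OF that] smooth_cdf.density_measurable[OF cdf[OF that]]]
      measurable_compose[OF h[OF that] smooth_cdf.score_measurable[OF cdf[OF that]]] by simp_all
  then show ?thesis
    unfolding copula_leaf_eq quad_form_def by measurable
qed

lemma copula_leaf_fun_upd:
  fixes Fi fi :: "'i \<Rightarrow> real \<Rightarrow> real" and R :: "'i \<Rightarrow> 'i \<Rightarrow> real" and y :: "'i \<Rightarrow> real"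
  assumes fin: "finite J" and pd: "pos_def_on J R" and a: "a \<in> J"
  defines "p \<equiv> inv_on J R a a" and "b \<equiv> (\<Sum>j\<in>J - {a}. inv_on J R a j * Phi_inv (Fi j (y j)))"
  shows "copula_leaf J Fi fi R (y(a := t))
       = copula_leaf (J - {a}) Fi fi R y * (sqrt p / exp (b\<^sup>2 / (2 * p)))
         * (fi a t * exp (- ((p - 1) * (Phi_inv (Fi a t))\<^sup>2 + 2 * b * Phi_inv (Fi a t)) / 2))"
proof -
  let ?P = "inv_on J R" and ?M = "copula_exponent J R"
  define z where "z i = Phi_inv (Fi i (y i))" for i
  define s where "s = Phi_inv (Fi a t)"
  define Q where "Q = quad_form (J - {a}) ?M z"
  have p: "0 < p"
    unfolding p_def by (rule inv_on_diag_pos[OF fin pd a])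
  have sym: "?M i j = ?M j i" for i j
    using inv_on_sym[OF fin pd] by auto
  have "(\<Sum>j\<in>J - {a}. ?M a j * (z(a := s)) j) = b"
    unfolding b_def z_def by (intro sum.cong) auto
  moreover have "quad_form (J - {a}) ?M (z(a := s)) = Q"
    unfolding Q_def by (intro quad_form_cong) auto
  ultimately have full: "quad_form J ?M (z(a := s)) = (p - 1) * s\<^sup>2 + 2 * b * s + Q"
    using quad_form_remove[OF fin a sym, where z = "z(a := s)"] by (simp add: p_def)
  have "quad_form (J - {a}) (copula_exponent (J - {a}) R) z = quad_form (J - {a}) (\<lambda>i j. ?M i j - ?P a i * ?P a j / p) z"
  proof (rule quad_form_cong)
    show "copula_exponent (J - {a}) R i j = ?M i j - ?P a i * ?P a j / p" if "i \<in> J - {a}" "j \<in> J - {a}" for i j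
      using that inv_on_sym[OF fin pd, of i a] by (simp add: inv_on_remove[OF fin pd a] p_def)
  qed simp
  also have "\<dots> = Q - b\<^sup>2 / p"
    unfolding quad_form_rank_one_update Q_def b_def z_def ..
  finally have restricted: "quad_form (J - {a}) (copula_exponent (J - {a}) R) z = Q - b\<^sup>2 / p" .
  have prod: "(\<Prod>i\<in>J. fi i ((y(a := t)) i)) = fi a t * (\<Prod>i\<in>J - {a}. fi i (y i))"
    by (simp add: prod.remove[OF fin a])
  have scores: "(\<lambda>i. Phi_inv (Fi i ((y(a := t)) i))) = z(a := s)" "(\<lambda>i. Phi_inv (Fi i (y i))) = z"
    by (auto simp: z_def s_def)
  have det: "det_on (J - {a}) R = det_on J R * p"
    unfolding p_def by (rule det_on_mult_inv_on_diag[OF fin pd a, symmetric])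
  show ?thesis
    unfolding copula_leaf_eq prod scores det full restricted s_def[symmetric]
    using p det_on_pos[OF fin pd]
    by (simp add: real_sqrt_mult exp_add[symmetric] exp_diff[symmetric] field_simps)
qed

lemma nn_integral_copula_leaf_fun_upd:
  assumes fin: "finite J" and pd: "pos_def_on J R" and a: "a \<in> J"
    and cdf: "\<And>i. i \<in> J \<Longrightarrow> smooth_cdf (Fi i) (fi i)"
  shows "(\<integral>\<^sup>+ t. ennreal (copula_leaf J Fi fi R (y(a := t))) \<partial>lborel)
       = ennreal (copula_leaf (J - {a}) Fi fi R y)"
proof -
  interpret A: smooth_cdf "Fi a" "fi a"
    by (rule cdf[OF a])
  define p where "p = inv_on J R a a"
  define b where "b = (\<Sum>j\<in>J - {a}. inv_on J R a j * Phi_inv (Fi j (y j)))"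
  define c where "c = copula_leaf (J - {a}) Fi fi R y * (sqrt p / exp (b\<^sup>2 / (2 * p)))"
  have p: "0 < p"
    unfolding p_def by (rule inv_on_diag_pos[OF fin pd a])
  have c: "0 \<le> c"
    unfolding c_def using p fin
    by (intro mult_nonneg_nonneg divide_nonneg_pos copula_leaf_nonneg pos_def_on_subset[OF fin pd]
        smooth_cdf.density_nonneg[OF cdf]) auto
  have "(\<integral>\<^sup>+ t. ennreal (copula_leaf J Fi fi R (y(a := t))) \<partial>lborel)
      = (\<integral>\<^sup>+ t. ennreal c * ennreal (fi a t * exp (- ((p - 1) * (A.score t)\<^sup>2 + 2 * b * A.score t) / 2)) \<partial>lborel)"
    unfolding copula_leaf_fun_upd[OF fin pd a] p_def[symmetric] b_def[symmetric] c_def[symmetric]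
    using c A.density_nonneg by (intro nn_integral_cong) (simp add: ennreal_mult)
  also have "\<dots> = ennreal c * (\<integral>\<^sup>+ t. ennreal (fi a t * exp (- ((p - 1) * (A.score t)\<^sup>2 + 2 * b * A.score t) / 2)) \<partial>lborel)"
    using A.density_measurable A.score_measurable by (intro nn_integral_cmult) simp
  also have "\<dots> = ennreal c * ennreal (exp (b\<^sup>2 / (2 * p)) / sqrt p)"
    by (simp only: A.nn_integral_score_gaussian[OF p])
  also have "\<dots> = ennreal (copula_leaf (J - {a}) Fi fi R y)"
    using c p by (simp add: c_def ennreal_mult[symmetric])
  finally show ?thesis .
qed

section \<open>Integrating the circuit\<close>

lemma nn_integral_sum_mult:
  fixes w h :: "'s \<Rightarrow> real" and g :: "'s \<Rightarrow> real \<Rightarrow> real"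
  assumes S: "finite S"
    and w: "\<And>s. s \<in> S \<Longrightarrow> 0 \<le> w s" and g: "\<And>s t. s \<in> S \<Longrightarrow> 0 \<le> g s t"
    and g_measurable: "\<And>s. s \<in> S \<Longrightarrow> g s \<in> borel_measurable borel"
    and g_integral: "\<And>s. s \<in> S \<Longrightarrow> (\<integral>\<^sup>+ t. ennreal (g s t) \<partial>lborel) = ennreal (h s)"
    and h: "\<And>s. s \<in> S \<Longrightarrow> 0 \<le> h s"
  shows "(\<integral>\<^sup>+ t. ennreal (\<Sum>s\<in>S. w s * g s t) \<partial>lborel) = ennreal (\<Sum>s\<in>S. w s * h s)"
proof -
  have "(\<integral>\<^sup>+ t. ennreal (\<Sum>s\<in>S. w s * g s t) \<partial>lborel) = (\<integral>\<^sup>+ t. (\<Sum>s\<in>S. ennreal (w s) * ennreal (g s t)) \<partial>lborel)"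
    using w g by (intro nn_integral_cong) (simp add: sum_ennreal[symmetric] ennreal_mult)
  also have "\<dots> = (\<Sum>s\<in>S. ennreal (w s) * (\<integral>\<^sup>+ t. ennreal (g s t) \<partial>lborel))"
    using g_measurable by (simp add: nn_integral_sum nn_integral_cmult)
  also have "\<dots> = ennreal (\<Sum>s\<in>S. w s * h s)"
    using w h by (simp add: g_integral sum_ennreal[symmetric] ennreal_mult)
  finally show ?thesis .
qed

lemma circ_Suc:
  "c \<noteq> 0 \<Longrightarrow> circ K W L (Suc c) k
     = (\<Sum>s\<in>{1..K} \<times> {1..K}. W (Suc c) s k * circ K W L c (fst s) * L (Suc c) (snd s))"
  by (cases c) (simp_all add: sum.cartesian_product split_beta)

lemma circ_cong:
  "(\<And>c' k. c' \<le> c \<Longrightarrow> L c' k = L' c' k) \<Longrightarrow> circ K W L c k = circ K W L' c k"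
  by (induction K W L c k rule: circ.induct) (auto intro!: sum.cong)

lemma circ_nonneg:
  assumes L: "\<And>c k. 0 \<le> L c k"
    and W: "\<And>c i j k. c \<in> {2..C} \<Longrightarrow> i \<in> {1..K} \<Longrightarrow> j \<in> {1..K} \<Longrightarrow> k \<in> {1..K} \<Longrightarrow> 0 \<le> W c (i, j) k"
  shows "c \<le> C \<Longrightarrow> k \<in> {1..K} \<Longrightarrow> 0 \<le> circ K W L c k"
proof (induction c arbitrary: k)
  case (Suc c)
  then show ?case
    using L W by (cases c) (auto intro!: sum_nonneg mult_nonneg_nonneg)
qed simp

lemma circ_measurable:
  assumes "\<And>c k. (\<lambda>x. L x c k) \<in> borel_measurable M"
  shows "(\<lambda>x. circ K W (L x) c k) \<in> borel_measurable M"
proof (induction c arbitrary: k)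
  case (Suc c)
  then show ?case
    using assms by (cases c) auto
qed simp

context
  fixes C K c\<^sub>0 :: nat and W :: "nat \<Rightarrow> nat \<times> nat \<Rightarrow> nat \<Rightarrow> real"
    and L :: "real \<Rightarrow> nat \<Rightarrow> nat \<Rightarrow> real" and L' :: "nat \<Rightarrow> nat \<Rightarrow> real"
  assumes L_nonneg: "\<And>t c k. 0 \<le> L t c k" and L'_nonneg: "\<And>c k. 0 \<le> L' c k"
    and L_measurable: "\<And>c k. (\<lambda>t. L t c k) \<in> borel_measurable borel"
    and L_other: "\<And>t c k. c \<noteq> c\<^sub>0 \<Longrightarrow> L t c k = L' c k"
    and L_integral: "\<And>k. k \<in> {1..K} \<Longrightarrow> (\<integral>\<^sup>+ t. ennreal (L t c\<^sub>0 k) \<partial>lborel) = ennreal (L' c\<^sub>0 k)"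
    and W: "\<And>c i j k. c \<in> {2..C} \<Longrightarrow> i \<in> {1..K} \<Longrightarrow> j \<in> {1..K} \<Longrightarrow> k \<in> {1..K} \<Longrightarrow> 0 \<le> W c (i, j) k"
    and c\<^sub>0: "1 \<le> c\<^sub>0"
begin

lemma nn_integral_circ_at_channel:
  assumes "c\<^sub>0 \<le> C" "k \<in> {1..K}"
  shows "(\<integral>\<^sup>+ t. ennreal (circ K W (L t) c\<^sub>0 k) \<partial>lborel) = ennreal (circ K W L' c\<^sub>0 k)"
proof (cases "c\<^sub>0 = 1")
  case False
  then obtain c where c: "c\<^sub>0 = Suc c" "c \<noteq> 0"
    using c\<^sub>0 by (cases c\<^sub>0) auto
  have "circ K W (L t) c i = circ K W L' c i" for t i
    by (rule circ_cong) (use L_other c in auto)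
  then show ?thesis
    unfolding c(1) circ_Suc[OF c(2)]
    by (simp only:) (intro nn_integral_sum_mult mult_nonneg_nonneg W circ_nonneg[where C = C] L'_nonneg
        L_measurable; use assms c L_nonneg L_integral W in \<open>auto simp: mem_Times_iff\<close>)
qed (use assms L_integral in simp)

lemma nn_integral_circ:
  assumes "c\<^sub>0 \<le> c" "c \<le> C" "k \<in> {1..K}"
  shows "(\<integral>\<^sup>+ t. ennreal (circ K W (L t) c k) \<partial>lborel) = ennreal (circ K W L' c k)"
  using assms
proof (induction c arbitrary: k rule: nat_induct_at_least)
  case base
  then show ?case
    by (rule nn_integral_circ_at_channel)
next
  case (Suc c)
  then have c: "c \<noteq> 0" "Suc c \<noteq> c\<^sub>0"
    using c\<^sub>0 by auto
  have "circ K W (L t) (Suc c) k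
      = (\<Sum>s\<in>{1..K} \<times> {1..K}. (W (Suc c) s k * L' (Suc c) (snd s)) * circ K W (L t) c (fst s))" for t
    using circ_Suc[OF c(1), of K W "L t" k] L_other[OF c(2)] by (simp add: mult_ac)
  moreover have "circ K W L' (Suc c) k
      = (\<Sum>s\<in>{1..K} \<times> {1..K}. (W (Suc c) s k * L' (Suc c) (snd s)) * circ K W L' c (fst s))"
    using circ_Suc[OF c(1), of K W L' k] by (simp add: mult_ac)
  ultimately show ?case
    by (simp only:) (intro nn_integral_sum_mult mult_nonneg_nonneg W circ_nonneg[where C = C] L_nonneg
        L'_nonneg circ_measurable L_measurable; use Suc c W in \<open>auto simp: mem_Times_iff\<close>)
qed

end

section \<open>Marginalising the CircuITS density\<close>

locale copula_circuit =
  fixes C K :: nat and w :: "nat \<Rightarrow> real" and W :: "nat \<Rightarrow> nat \<times> nat \<Rightarrow> nat \<Rightarrow> real"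
    and qc :: "'q \<Rightarrow> nat" and F f :: "nat \<Rightarrow> 'q \<Rightarrow> real \<Rightarrow> real" and R :: "nat \<Rightarrow> 'q \<Rightarrow> 'q \<Rightarrow> real"
  assumes w_nonneg: "\<And>k. k \<in> {1..K} \<Longrightarrow> 0 \<le> w k"
    and W_nonneg: "\<And>c i j k. c \<in> {2..C} \<Longrightarrow> i \<in> {1..K} \<Longrightarrow> j \<in> {1..K} \<Longrightarrow> k \<in> {1..K}
      \<Longrightarrow> 0 \<le> W c (i, j) k"
    and smooth_cdf: "\<And>k i. smooth_cdf (F k i) (f k i)"
    and pos_def: "\<And>k J. finite J \<Longrightarrow> pos_def_on J (R k)"
begin

definition leaf :: "'q set \<Rightarrow> ('q \<Rightarrow> real) \<Rightarrow> nat \<Rightarrow> nat \<Rightarrow> real" where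
  "leaf I y c k = copula_leaf {i \<in> I. qc i = c} (F k) (f k) (R k) y"

definition circuit_density :: "'q set \<Rightarrow> ('q \<Rightarrow> real) \<Rightarrow> real" where
  "circuit_density I y = (\<Sum>k\<in>{1..K}. w k * circ K W (leaf I y) C k)"

lemma leaf_nonneg: "finite I \<Longrightarrow> 0 \<le> leaf I y c k"
  unfolding leaf_def
  by (intro copula_leaf_nonneg pos_def smooth_cdf.density_nonneg[OF smooth_cdf]) auto

lemma leaf_measurable:
  "(\<And>i. i \<in> I \<Longrightarrow> (\<lambda>x. h x i) \<in> borel_measurable M) \<Longrightarrow> (\<lambda>x. leaf I (h x) c k) \<in> borel_measurable M"
  unfolding leaf_def by (intro copula_leaf_measurable smooth_cdf) auto

lemma circuit_density_nonneg: "finite I \<Longrightarrow> 0 \<le> circuit_density I y"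
  unfolding circuit_density_def
  by (intro sum_nonneg mult_nonneg_nonneg w_nonneg circ_nonneg[where C = C] leaf_nonneg W_nonneg) auto

lemma circuit_density_measurable:
  "(\<And>i. i \<in> I \<Longrightarrow> (\<lambda>x. h x i) \<in> borel_measurable M) \<Longrightarrow> (\<lambda>x. circuit_density I (h x)) \<in> borel_measurable M"
  unfolding circuit_density_def by (intro borel_measurable_sum borel_measurable_times
      borel_measurable_const circ_measurable leaf_measurable)

lemma nn_integral_circuit_density_update:
  assumes I: "finite I" and a: "a \<in> I" and qc_a: "qc a \<in> {1..C}"
  shows "(\<integral>\<^sup>+ t. ennreal (circuit_density I (y(a := t))) \<partial>lborel) = ennreal (circuit_density (I - {a}) y)"
proof -
  have other: "leaf I (y(a := t)) c k = leaf (I - {a}) y c k" if "c \<noteq> qc a" for t c k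
  proof -
    have "{i \<in> I. qc i = c} = {i \<in> I - {a}. qc i = c}"
      using that by auto
    then show ?thesis
      unfolding leaf_def by (simp only:) (rule copula_leaf_cong, simp)
  qed
  have channel: "(\<integral>\<^sup>+ t. ennreal (leaf I (y(a := t)) (qc a) k) \<partial>lborel) = ennreal (leaf (I - {a}) y (qc a) k)"
    for k
  proof -
    have "{i \<in> I - {a}. qc i = qc a} = {i \<in> I. qc i = qc a} - {a}"
      by auto
    then show ?thesis
      unfolding leaf_def by (simp only:) (rule nn_integral_copula_leaf_fun_upd, use I a pos_def smooth_cdf in auto)
  qed
  have "(\<integral>\<^sup>+ t. ennreal (circ K W (leaf I (y(a := t))) C k) \<partial>lborel) = ennreal (circ K W (leaf (I - {a}) y) C k)"
    if "k \<in> {1..K}" for k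
  proof (rule nn_integral_circ[where c\<^sub>0 = "qc a" and C = C])
    show "(\<lambda>t. leaf I (y(a := t)) c k) \<in> borel_measurable borel" for c k
      by (rule leaf_measurable) simp
    show "0 \<le> leaf I (y(a := t)) c k" "0 \<le> leaf (I - {a}) y c k" for t c k
      using I by (simp_all add: leaf_nonneg)
  qed (use that qc_a other channel W_nonneg in auto)
  moreover have "(\<lambda>t. circ K W (leaf I (y(a := t))) C k) \<in> borel_measurable borel" for k
    by (intro circ_measurable leaf_measurable) simp
  ultimately show ?thesis
    unfolding circuit_density_def
    by (intro nn_integral_sum_mult) (auto intro!: w_nonneg circ_nonneg[where C = C] leaf_nonneg W_nonneg I)
qed

lemma nn_integral_circuit_density_marginal:
  assumes "finite A"
  shows "finite I \<Longrightarrow> A \<subseteq> I \<Longrightarrow> \<forall>i\<in>I. qc i \<in> {1..C} \<Longrightarrow>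
    (\<integral>\<^sup>+ yA. ennreal (circuit_density I (\<lambda>i. if i \<in> A then yA i else y i)) \<partial>(PiM A (\<lambda>_. lborel)))
      = ennreal (circuit_density (I - A) y)"
  using assms
proof (induction A arbitrary: I rule: finite_induct)
  case empty
  then show ?case
    by (simp add: PiM_empty nn_integral_count_space_finite circuit_density_nonneg)
next
  case (insert a A)
  interpret product_sigma_finite "\<lambda>_. lborel :: real measure"
    by (simp add: product_sigma_finite_def sigma_finite_lborel)
  have merge_measurable: "(\<lambda>x. if i \<in> S then x i else y i) \<in> borel_measurable (PiM S (\<lambda>_. lborel))" for i S
    by (cases "i \<in> S") (simp_all add: measurable_component_singleton)
  have "(\<lambda>yA. ennreal (circuit_density I (\<lambda>i. if i \<in> insert a A then yA i else y i)))
      \<in> borel_measurable (PiM (insert a A) (\<lambda>_. lborel))"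
    by (intro measurable_compose[OF _ measurable_ennreal] circuit_density_measurable merge_measurable)
  moreover have "(\<lambda>i. if i \<in> insert a A then (x(a := t)) i else y i) = (\<lambda>i. if i \<in> A then x i else y i)(a := t)"
    for x t
    using insert.hyps by auto
  ultimately have "(\<integral>\<^sup>+ yA. ennreal (circuit_density I (\<lambda>i. if i \<in> insert a A then yA i else y i)) \<partial>(PiM (insert a A) (\<lambda>_. lborel)))
      = (\<integral>\<^sup>+ x. (\<integral>\<^sup>+ t. ennreal (circuit_density I ((\<lambda>i. if i \<in> A then x i else y i)(a := t))) \<partial>lborel)
          \<partial>(PiM A (\<lambda>_. lborel)))"
    by (simp add: product_nn_integral_insert[OF insert.hyps])
  also have "\<dots> = (\<integral>\<^sup>+ x. ennreal (circuit_density (I - {a}) (\<lambda>i. if i \<in> A then x i else y i)) \<partial>(PiM A (\<lambda>_. lborel)))"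
    using insert.prems by (intro nn_integral_cong nn_integral_circuit_density_update) auto
  also have "\<dots> = ennreal (circuit_density (I - insert a A) y)"
    using insert.IH[of "I - {a}"] insert.prems insert.hyps by (auto simp: Diff_insert2[symmetric])
  finally show ?case .
qed

end

theorem mainTheorem4:
  fixes \<phi> :: "real \<Rightarrow> 'a" and Proj :: "'a \<times> 'b \<Rightarrow> nat \<Rightarrow> 'e"
    and htil :: "(real \<times> nat \<times> real) list \<Rightarrow> nat \<Rightarrow> 'b"
    and g :: "'e \<Rightarrow> real^'h" and thetaMap :: "'e \<Rightarrow> 't"
    and Fc fd :: "'t \<Rightarrow> real \<Rightarrow> real"
    and C K :: nat
    and wroot :: "(real \<times> nat \<times> real) list \<Rightarrow> nat \<Rightarrow> real"
    and W :: "(real \<times> nat \<times> real) list \<Rightarrow> nat \<Rightarrow> nat \<times> nat \<Rightarrow> nat \<Rightarrow> real"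
    and X :: "(real \<times> nat \<times> real) list"
    and qt :: "'q \<Rightarrow> real" and qc :: "'q \<Rightarrow> nat"
    and I A :: "'q set" and y :: "'q \<Rightarrow> real"
  assumes C_pos: "C \<ge> 1" and K_pos: "K \<ge> 1"
    and F_mono: "\<And>\<theta>. strict_mono (Fc \<theta>)"
    and F_deriv: "\<And>\<theta> x. (Fc \<theta> has_real_derivative fd \<theta> x) (at x)"
    and f_cont: "\<And>\<theta>. continuous_on UNIV (fd \<theta>)"
    and F_bot: "\<And>\<theta>. (Fc \<theta> \<longlongrightarrow> 0) at_bot"
    and F_top: "\<And>\<theta>. (Fc \<theta> \<longlongrightarrow> 1) at_top"
    and wroot_nonneg: "\<And>Xs k. k \<in> {1..K} \<Longrightarrow> wroot Xs k \<ge> 0"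
    and wroot_sum: "\<And>Xs. (\<Sum>k\<in>{1..K}. wroot Xs k) = 1"
    and W_nonneg: "\<And>Xs c i j k. c \<in> {2..C} \<Longrightarrow> i \<in> {1..K} \<Longrightarrow> j \<in> {1..K} \<Longrightarrow> k \<in> {1..K}
                     \<Longrightarrow> W Xs c (i, j) k \<ge> 0"
    and W_sum: "\<And>Xs c k. c \<in> {2..C} \<Longrightarrow> k \<in> {1..K}
                     \<Longrightarrow> (\<Sum>ij\<in>{1..K} \<times> {1..K}. W Xs c ij k) = 1"
    and I_fin: "finite I"
    and I_chan: "\<forall>i\<in>I. qc i \<in> {1..C}"
    and A_sub: "A \<subseteq> I"
  shows "(\<integral>\<^sup>+ yA. ennreal (circuits_density C K \<phi> Proj htil g thetaMap Fc fd wroot W X qt qc I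
                        (\<lambda>i. if i \<in> A then yA i else y i)) \<partial>(PiM A (\<lambda>_. lborel)))
         = ennreal (circuits_density C K \<phi> Proj htil g thetaMap Fc fd wroot W X qt qc (I - A) y)"
proof -
  define e where "e k i = emb \<phi> Proj htil X k (qt i) (qc i)" for k i
  have cdf: "smooth_cdf (Fc \<theta>) (fd \<theta>)" for \<theta>
    by (rule smooth_cdf.intro) (fact F_mono F_deriv f_cont F_bot F_top)+
  interpret copula_circuit C K "wroot X" "W X" qc "\<lambda>k i. Fc (thetaMap (e k i))" "\<lambda>k i. fd (thetaMap (e k i))"
    "\<lambda>k. corrR g (e k)"
    by (intro copula_circuit.intro cdf) (simp_all add: wroot_nonneg W_nonneg pos_def_on_corrR)
  have "circuits_density C K \<phi> Proj htil g thetaMap Fc fd wroot W X qt qc J y' = circuit_density J y'" for J y'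
    by (simp add: circuits_density_def circuit_density_def leaf_def[abs_def] e_def[symmetric])
  then show ?thesis
    using nn_integral_circuit_density_marginal[OF finite_subset[OF A_sub I_fin] I_fin A_sub I_chan] by simp
qed

end
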